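(* Let $$I_N(t)=\frac12\int_\tau^t Y^N(s)\,D^N(s)\,ds,\qquad D^N(s)=Y^N(s-\tau)-Z^N(s).$$ Then for every $T>\tau$, $\sup_{t\in[\tau,T]}|I_N(t)|\to0$ in probability as $N\to\infty$.
   Context: Model. Fix $\tau>0$, $\mu\ge 0$, $N\in\mathbb N$, and write $L=\lfloor \tau N\rfloor$. The state space is $\Omega_N=[0,\infty)^{L+1}$, with elements $x=(x_{-L},\dots,x_0)$. Define $\theta_N^\pm:\Omega_N\to\Omega_N$ by $(\theta_N^\pm x)_j=x_{j+1}$ for $-L\le j<0$, $(\theta_N^+x)_0=x_0(1+\frac1N)$, $(\theta_N^-x)_0=\max\{x_0(1-\frac{x_{-L}}{N^2}),0\}$. Let $\xi^N=(\xi^N(n))_{n\ge0}$ be the discrete-time Markov chain on $\Omega_N$ moving from $x$ to $\theta_N^+x$ or $\theta_N^-x$ with probability $1/2$ each, with $\xi^N_j(0)=\mu N$ for all $j$. Let $(\sigma_n)_{n\ge1}$ be i.i.d. Exp(1), independent of $\xi^N$, $J_0=0$, $J_n=\sigma_1+\dots+\sigma_n$, and $X^N(t)=\xi^N(n)$ for $t\in[J_n,J_{n+1})$. Define $Y^N(t)=X^N_{-L}(N(t+\tau))/N$ for $t\in[-\tau,0)$, $Y^N(t)=X^N_0(Nt)/N$ for $t\ge0$, and $Z^N(t)=X^N_{-L}(Nt)/N$ for $t\ge0$. *)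

theory Defs
  imports "HOL-Probability.Probability"
begin

text \<open>States x = (x_{-L},...,x_0) are represented as functions int => real;
  only the indices -L..0 are meaningful.\<close>

definition Lof :: "real \<Rightarrow> nat \<Rightarrow> nat" where
  "Lof tau N = nat \<lfloor>tau * real N\<rfloor>"

definition theta_plus :: "nat \<Rightarrow> (int \<Rightarrow> real) \<Rightarrow> (int \<Rightarrow> real)" where
  "theta_plus N x = (\<lambda>j. if j < 0 then x (j + 1) else x 0 * (1 + 1 / real N))"

definition theta_minus :: "nat \<Rightarrow> nat \<Rightarrow> (int \<Rightarrow> real) \<Rightarrow> (int \<Rightarrow> real)" where
  "theta_minus N L x = (\<lambda>j. if j < 0 then x (j + 1)
      else max (x 0 * (1 - x (- int L) / (real N)^2)) 0)"

fun chain :: "real \<Rightarrow> real \<Rightarrow> nat \<Rightarrow> (nat \<Rightarrow> bool) \<Rightarrow> nat \<Rightarrow> (int \<Rightarrow> real)" where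
  "chain tau mu N c 0 = (\<lambda>j. mu * real N)"
| "chain tau mu N c (Suc n) = (if c n then theta_plus N (chain tau mu N c n)
      else theta_minus N (Lof tau N) (chain tau mu N c n))"

text \<open>Jump times: J n = sigma_1 + ... + sigma_n, where sigma_{i+1} is stored as s i.\<close>
definition jump_time :: "(nat \<Rightarrow> real) \<Rightarrow> nat \<Rightarrow> real" where
  "jump_time s n = (\<Sum>i<n. s i)"

text \<open>Number of jumps up to time t: the n with J n <= t < J (n+1).\<close>
definition jump_count :: "(nat \<Rightarrow> real) \<Rightarrow> real \<Rightarrow> nat" where
  "jump_count s t = card {n. 1 \<le> n \<and> jump_time s n \<le> t}"

definition Xproc :: "real \<Rightarrow> real \<Rightarrow> nat \<Rightarrow> (nat \<Rightarrow> bool) \<Rightarrow> (nat \<Rightarrow> real) \<Rightarrow> real \<Rightarrow> (int \<Rightarrow> real)" where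
  "Xproc tau mu N c s t = chain tau mu N c (jump_count s t)"

definition Yproc :: "real \<Rightarrow> real \<Rightarrow> nat \<Rightarrow> (nat \<Rightarrow> bool) \<Rightarrow> (nat \<Rightarrow> real) \<Rightarrow> real \<Rightarrow> real" where
  "Yproc tau mu N c s t =
     (if t < 0 then Xproc tau mu N c s (real N * (t + tau)) (- int (Lof tau N)) / real N
      else Xproc tau mu N c s (real N * t) 0 / real N)"

definition Zproc :: "real \<Rightarrow> real \<Rightarrow> nat \<Rightarrow> (nat \<Rightarrow> bool) \<Rightarrow> (nat \<Rightarrow> real) \<Rightarrow> real \<Rightarrow> real" where
  "Zproc tau mu N c s t = Xproc tau mu N c s (real N * t) (- int (Lof tau N)) / real N"

definition Dproc :: "real \<Rightarrow> real \<Rightarrow> nat \<Rightarrow> (nat \<Rightarrow> bool) \<Rightarrow> (nat \<Rightarrow> real) \<Rightarrow> real \<Rightarrow> real" where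
  "Dproc tau mu N c s t = Yproc tau mu N c s (t - tau) - Zproc tau mu N c s t"

definition Iproc :: "real \<Rightarrow> real \<Rightarrow> nat \<Rightarrow> (nat \<Rightarrow> bool) \<Rightarrow> (nat \<Rightarrow> real) \<Rightarrow> real \<Rightarrow> real" where
  "Iproc tau mu N c s t = 1/2 * integral {tau..t} (\<lambda>u. Yproc tau mu N c s u * Dproc tau mu N c s u)"

end

theory Submission
  imports Defs
begin

text \<open>
  Between jumps the state is frozen, and each jump changes \<open>x\<^sub>0\<close> by at most
  \<open>x\<^sub>0/N + x\<^sub>0 x\<^sub>-\<^sub>L/N\<^sup>2\<close>. Up to jump number \<open>N(T+1)\<close> all coordinates are at most
  \<open>N B\<close> with \<open>B = \<mu> e\<^sup>T\<^sup>+\<^sup>1\<close>, so \<open>n \<mapsto> x\<^sub>0(n)/N\<close> changes by at most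
  \<open>(B + B\<^sup>2)/N\<close> per jump. Since \<open>x\<^sub>-\<^sub>L\<close> after \<open>n\<close> jumps is \<open>x\<^sub>0\<close> after \<open>n - L\<close>
  jumps, \<open>D(s)\<close> is a difference of \<open>x\<^sub>0/N\<close> at the jump counts of times \<open>N(s-\<tau>)\<close>
  and \<open>N s\<close> (the latter shifted by \<open>L \<approx> \<tau>N\<close>). If every jump count up to time
  \<open>N T\<close> is within \<open>h\<close> of the time, these indices differ by at most \<open>2h+1\<close>.

  Jump counts are controlled through the jump times at the grid points \<open>j m\<close>,
  \<open>m \<approx> \<eta>N\<close>, \<open>j \<le> R = O(1/\<eta>)\<close>: these are Erlang distributed, so Chebyshev and a
  union bound make the probability that one of them is off by \<open>m\<close> at most
  \<open>R\<^sup>2/(\<eta>N)\<close>; otherwise \<open>h = 2m\<close> and \<open>|I\<^sub>N| \<le> C(4\<eta> + 5/N)\<close>.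
\<close>

lemma chain_nonneg: "0 \<le> mu \<Longrightarrow> 0 \<le> chain tau mu N c n j"
  by (induction n arbitrary: j) (auto simp: theta_plus_def theta_minus_def)

lemma chain_le_growth:
  assumes "0 \<le> mu"
  shows "chain tau mu N c n j \<le> mu * real N * (1 + 1 / real N) ^ n"
proof (induction n arbitrary: j)
  case (Suc n)
  let ?x = "chain tau mu N c n"
  have "?x 0 * (1 - ?x (- int (Lof tau N)) / (real N)^2) \<le> ?x 0"
    using chain_nonneg[OF assms] by (simp add: algebra_simps)
  moreover have "?x 0 * (1 + 1 / real N) \<le> mu * real N * (1 + 1 / real N) ^ n * (1 + 1 / real N)"
    using Suc.IH[of 0] by (rule mult_right_mono) simp
  then have "?x 0 * (1 + 1 / real N) \<le> mu * real N * (1 + 1 / real N) ^ Suc n"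
    by (simp add: mult_ac)
  moreover have "mu * real N * (1 + 1 / real N) ^ n \<le> mu * real N * (1 + 1 / real N) ^ Suc n"
    using assms by (intro mult_left_mono power_increasing) auto
  ultimately show ?case
    using Suc.IH[of 0] Suc.IH[of "j + 1"] assms
    by (auto simp: theta_plus_def theta_minus_def simp del: power_Suc)
qed simp

lemma chain_le_exp:
  assumes "0 \<le> mu" and "real n \<le> real N * a"
  shows "chain tau mu N c n j \<le> mu * real N * exp a"
proof (cases "N = 0")
  case False
  have "(1 + 1 / real N) ^ n \<le> exp (1 / real N) ^ n"
    by (intro power_mono) (auto simp: add.commute)
  also have "\<dots> = exp (real n / real N)" by (simp add: exp_of_nat_mult[symmetric])
  also have "\<dots> \<le> exp a" using assms False by (simp add: field_simps)
  finally have "mu * real N * (1 + 1 / real N) ^ n \<le> mu * real N * exp a"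
    using assms(1) by (intro mult_left_mono) auto
  with chain_le_growth[OF assms(1)] show ?thesis by (rule order.trans)
qed (use chain_le_growth[OF assms(1), of tau 0 c n j] in simp)

text \<open>The delayed coordinate is the current one L steps earlier; the truncated subtraction
  \<open>n - d\<close> accounts for the constant initial history.\<close>

lemma chain_lag: "chain tau mu N c n (- int d) = chain tau mu N c (n - d) 0"
proof (induction n arbitrary: d)
  case (Suc n)
  then show ?case
    by (cases d) (auto simp: theta_plus_def theta_minus_def)
qed simp

lemma chain_increment_le:
  assumes "0 \<le> mu"
  shows "\<bar>chain tau mu N c (Suc n) 0 - chain tau mu N c n 0\<bar>
    \<le> chain tau mu N c n 0 / real N
      + chain tau mu N c n 0 * chain tau mu N c n (- int (Lof tau N)) / (real N)^2"
proof -
  define x a where "x = chain tau mu N c n 0" and "a = chain tau mu N c n (- int (Lof tau N))"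
  have "0 \<le> x" "0 \<le> a" using chain_nonneg[OF assms] by (auto simp: x_def a_def)
  then have q: "0 \<le> x / real N" "0 \<le> x * a / (real N)^2" by simp_all
  show ?thesis
  proof (cases "c n")
    case True
    then show ?thesis
      using \<open>0 \<le> x\<close> q by (simp add: theta_plus_def x_def[symmetric] a_def[symmetric] algebra_simps)
  next
    case False
    then have "chain tau mu N c (Suc n) 0 = max (x - x * a / (real N)^2) 0"
      by (simp add: theta_minus_def x_def a_def algebra_simps)
    then have "x - x * a / (real N)^2 \<le> chain tau mu N c (Suc n) 0"
      and "chain tau mu N c (Suc n) 0 \<le> x"
      using \<open>0 \<le> x\<close> q by auto
    then show ?thesis
      using q unfolding x_def[symmetric] a_def[symmetric] by linarith
  qed
qed

lemma abs_diff_le_of_increments_le: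
  fixes f :: "nat \<Rightarrow> real"
  assumes step: "\<And>n. n < K \<Longrightarrow> \<bar>f (Suc n) - f n\<bar> \<le> C" and "p \<le> K" "q \<le> K"
  shows "\<bar>f p - f q\<bar> \<le> \<bar>real p - real q\<bar> * C"
proof -
  have ordered: "\<bar>f q - f p\<bar> \<le> (real q - real p) * C" if "p \<le> q" "q \<le> K" for p q
  proof -
    have "\<bar>f q - f p\<bar> = \<bar>\<Sum>i = p..<q. f (Suc i) - f i\<bar>" by (simp add: sum_Suc_diff' that)
    also have "\<dots> \<le> (\<Sum>i = p..<q. \<bar>f (Suc i) - f i\<bar>)" by (rule sum_abs)
    also have "\<dots> \<le> (\<Sum>i = p..<q. C)" using step that by (intro sum_mono) auto
    finally show ?thesis using that by (simp add: of_nat_diff)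
  qed
  show ?thesis
    using ordered[of p q] ordered[of q p] assms by (cases "p \<le> q") (auto simp: abs_minus_commute)
qed

lemma chain_lipschitz:
  assumes mu: "0 \<le> mu" and N: "0 < N" and B: "mu * exp a \<le> B"
    and horizon: "real p \<le> real N * a" "real q \<le> real N * a"
  shows "\<bar>chain tau mu N c p 0 - chain tau mu N c q 0\<bar> \<le> \<bar>real p - real q\<bar> * (B + B^2)"
proof (rule abs_diff_le_of_increments_le)
  fix n assume "n < max p q"
  then have "real n \<le> real N * a" using horizon by linarith
  then have le: "chain tau mu N c n j \<le> real N * B" for j
    using chain_le_exp[OF mu, of n N a tau c j] mult_left_mono[OF B, of "real N"]
    by (simp add: mult_ac)
  define x a' where "x = chain tau mu N c n 0" and "a' = chain tau mu N c n (- int (Lof tau N))"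
  have nn: "0 \<le> x" "0 \<le> a'" using chain_nonneg[OF mu] by (auto simp: x_def a'_def)
  have le': "x \<le> real N * B" "a' \<le> real N * B" using le by (simp_all add: x_def a'_def)
  have "x / real N \<le> B" using le'(1) N by (simp add: field_simps)
  moreover have "x * a' \<le> (real N * B) * (real N * B)"
    using le' nn by (intro mult_mono) auto
  then have "x * a' / (real N)^2 \<le> B^2" using N by (simp add: field_simps power2_eq_square)
  ultimately show "\<bar>chain tau mu N c (Suc n) 0 - chain tau mu N c n 0\<bar> \<le> B + B^2"
    using chain_increment_le[OF mu, of tau N c n] unfolding x_def a'_def by linarith
qed auto

lemma jump_time_mono: "(\<And>i. 0 \<le> s i) \<Longrightarrow> m \<le> n \<Longrightarrow> jump_time s m \<le> jump_time s n"
  unfolding jump_time_def by (rule sum_mono2) auto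

lemma jump_times_below_subset:
  assumes "\<And>i. 0 \<le> s i" and "t < jump_time s K"
  shows "{n. 1 \<le> n \<and> jump_time s n \<le> t} \<subseteq> {1..<K}"
proof
  fix n assume n: "n \<in> {n. 1 \<le> n \<and> jump_time s n \<le> t}"
  have "\<not> K \<le> n"
    using n assms jump_time_mono[of s K n] by auto
  then show "n \<in> {1..<K}" using n by simp
qed

lemma jump_count_less:
  assumes "\<And>i. 0 \<le> s i" and "t < jump_time s K" and "1 \<le> K"
  shows "jump_count s t < K"
proof -
  have "jump_count s t \<le> card {1..<K}"
    unfolding jump_count_def using jump_times_below_subset[of s t K] assms by (intro card_mono) simp_all
  then show ?thesis using assms(3) by simp
qed

lemma le_jump_count:
  assumes s: "\<And>i. 0 \<le> s i" and "t < jump_time s K" and "jump_time s k \<le> t"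
  shows "k \<le> jump_count s t"
proof -
  have "{1..k} \<subseteq> {n. 1 \<le> n \<and> jump_time s n \<le> t}"
  proof
    fix n assume "n \<in> {1..k}"
    moreover from this have "jump_time s n \<le> jump_time s k" using jump_time_mono[of s n k] s by simp
    ultimately show "n \<in> {n. 1 \<le> n \<and> jump_time s n \<le> t}" using assms(3) by simp
  qed
  moreover have "finite {n. 1 \<le> n \<and> jump_time s n \<le> t}"
    using jump_times_below_subset[of s t K] assms by (meson finite_atLeastLessThan finite_subset)
  ultimately have "card {1..k} \<le> jump_count s t"
    unfolding jump_count_def by (intro card_mono)
  then show ?thesis by simp
qed

lemma exists_multiple_between:
  fixes x :: real and m :: nat
  assumes "0 < m" and "0 \<le> x"
  obtains j where "x < real (j * m)" and "real (j * m) \<le> x + real m"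
proof
  define j where "j = nat \<lfloor>x / real m\<rfloor> + 1"
  have "real j = of_int \<lfloor>x / real m\<rfloor> + 1" using assms by (simp add: j_def)
  then have "x / real m < real j" "real j \<le> x / real m + 1" by linarith+
  then show "x < real (j * m)" "real (j * m) \<le> x + real m"
    using assms by (simp_all add: field_simps)
qed

lemma jump_count_close_to_time:
  fixes h u :: real and m R :: nat
  assumes s: "\<And>i. 0 \<le> s i" and m: "0 < m" and h: "0 \<le> h" and u: "0 \<le> u"
    and cover: "u + h + real m \<le> real (R * m)"
    and grid: "\<And>j. j \<in> {1..R} \<Longrightarrow> \<bar>jump_time s (j * m) - real (j * m)\<bar> \<le> h"
  shows "\<bar>real (jump_count s u) - u\<bar> \<le> h + real m"
proof -
  have grid_index: "j \<in> {1..R}" if "0 < real (j * m)" "real (j * m) \<le> real (R * m)" for j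
    using that m by (auto simp del: of_nat_mult)
  obtain j where j: "u + h < real (j * m)" "real (j * m) \<le> u + h + real m"
    using exists_multiple_between[OF m] u h by (metis add_nonneg_nonneg)
  then have "j \<in> {1..R}" using u h cover by (intro grid_index) linarith+
  then have "u < jump_time s (j * m)" using grid j by force
  moreover have "1 \<le> j * m" using \<open>j \<in> {1..R}\<close> m by simp
  ultimately have upper: "jump_count s u < j * m" and after: "u < jump_time s (j * m)"
    using jump_count_less[of s u "j * m"] s by auto
  have lower: "u - h - real m \<le> real (jump_count s u)"
  proof (cases "0 \<le> u - h - real m")
    case True
    obtain i where i: "u - h - real m < real (i * m)" "real (i * m) \<le> u - h"
      using exists_multiple_between[OF m True] by auto
    then have "i \<in> {1..R}" using True h cover by (intro grid_index) linarith+
    then have "jump_time s (i * m) \<le> u" using grid i by force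
    then have "i * m \<le> jump_count s u" using le_jump_count[of s u "j * m"] s after by blast
    then show ?thesis using i by linarith
  qed simp
  show ?thesis using upper lower j unfolding abs_le_iff by linarith
qed

lemma lag_index_close:
  fixes n1 n2 :: nat and h :: real
  assumes tau: "0 \<le> tau"
    and n1: "\<bar>real n1 - real N * (u - tau)\<bar> \<le> h" and n2: "\<bar>real n2 - real N * u\<bar> \<le> h"
  shows "\<bar>real n1 - real (n2 - Lof tau N)\<bar> \<le> 2 * h + 1"
proof -
  have L: "real (Lof tau N) \<le> tau * real N" "tau * real N < real (Lof tau N) + 1"
    using tau by (auto simp: Lof_def)
  have "real N * (u - tau) = real N * u - tau * real N" by (simp add: algebra_simps)
  then show ?thesis
    using n1 n2 L by (cases "Lof tau N \<le> n2") (auto simp: abs_le_iff of_nat_diff)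
qed

lemma Yproc_eq_chain:
  "0 \<le> u \<Longrightarrow> Yproc tau mu N c s u = chain tau mu N c (jump_count s (real N * u)) 0 / real N"
  by (simp add: Yproc_def Xproc_def)

lemma Dproc_eq_chain:
  "tau \<le> u \<Longrightarrow> Dproc tau mu N c s u =
    (chain tau mu N c (jump_count s (real N * (u - tau))) 0
      - chain tau mu N c (jump_count s (real N * u) - Lof tau N) 0) / real N"
  by (simp add: Dproc_def Yproc_eq_chain Zproc_def Xproc_def chain_lag diff_divide_distrib)

lemma abs_integral_le:
  fixes f :: "real \<Rightarrow> real"
  assumes "a \<le> b" and "0 \<le> C" and "\<And>x. x \<in> {a..b} \<Longrightarrow> \<bar>f x\<bar> \<le> C"
  shows "\<bar>integral {a..b} f\<bar> \<le> C * (b - a)"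
proof (cases "f integrable_on {a..b}")
  case True
  then show ?thesis
    using has_integral_bound_real[where S = "{}" and B = C and f = f and a = a and b = b] assms
    by auto
qed (use assms in \<open>simp add: not_integrable_integral\<close>)

lemma Yproc_Dproc_bound:
  assumes tau: "0 < tau" and mu: "0 \<le> mu" and N: "0 < N" and B: "mu * exp (T + 1) \<le> B"
    and h: "h \<le> real N"
    and close: "\<And>v. 0 \<le> v \<Longrightarrow> v \<le> real N * T \<Longrightarrow> \<bar>real (jump_count s v) - v\<bar> \<le> h"
    and u: "u \<in> {tau..T}"
  shows "\<bar>Yproc tau mu N c s u * Dproc tau mu N c s u\<bar> \<le> B * (B + B^2) * (2 * h + 1) / real N"
proof -
  define x where "x n = chain tau mu N c n 0" for n
  define n1 n2 where "n1 = jump_count s (real N * (u - tau))" and "n2 = jump_count s (real N * u)"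
  have close1: "\<bar>real n1 - real N * (u - tau)\<bar> \<le> h"
    unfolding n1_def using u tau by (intro close) (auto intro: mult_left_mono)
  have close2: "\<bar>real n2 - real N * u\<bar> \<le> h"
    unfolding n2_def using u tau by (intro close) (auto intro: mult_left_mono)
  have "real N * u \<le> real N * T" using u by (intro mult_left_mono) auto
  moreover have "real N * (u - tau) \<le> real N * u" using tau by (intro mult_left_mono) auto
  ultimately have horizon: "real n1 \<le> real N * (T + 1)" "real n2 \<le> real N * (T + 1)"
    using close1 close2 h unfolding abs_le_iff by (simp_all add: algebra_simps)
  then have horizon': "real (n2 - Lof tau N) \<le> real N * (T + 1)" by simp
  have B0: "0 \<le> B" using mu B by (meson exp_ge_zero mult_nonneg_nonneg order.trans)
  have "x n2 \<le> mu * real N * exp (T + 1)"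
    unfolding x_def by (rule chain_le_exp[OF mu horizon(2)])
  also have "\<dots> \<le> real N * B" using mult_left_mono[OF B, of "real N"] by (simp add: mult_ac)
  finally have "x n2 \<le> real N * B" .
  then have Y: "\<bar>Yproc tau mu N c s u\<bar> \<le> B"
    using u tau N chain_nonneg[OF mu] by (simp add: Yproc_eq_chain x_def n2_def field_simps)
  have "\<bar>x n1 - x (n2 - Lof tau N)\<bar> \<le> \<bar>real n1 - real (n2 - Lof tau N)\<bar> * (B + B^2)"
    unfolding x_def using chain_lipschitz[OF mu N B horizon(1) horizon'] .
  also have "\<dots> \<le> (2 * h + 1) * (B + B^2)"
    using lag_index_close[OF _ close1 close2] tau B0 by (intro mult_right_mono) auto
  finally have D: "\<bar>Dproc tau mu N c s u\<bar> \<le> (B + B^2) * (2 * h + 1) / real N"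
    using u N by (simp add: Dproc_eq_chain x_def n1_def n2_def divide_right_mono mult.commute)
  show ?thesis
    using mult_mono[OF Y D] B0 by (simp add: abs_mult mult.assoc)
qed

lemma Iproc_bound:
  assumes tau: "0 < tau" and mu: "0 \<le> mu" and N: "0 < N" and B: "mu * exp (T + 1) \<le> B"
    and h: "h \<le> real N"
    and close: "\<And>v. 0 \<le> v \<Longrightarrow> v \<le> real N * T \<Longrightarrow> \<bar>real (jump_count s v) - v\<bar> \<le> h"
    and t: "t \<in> {tau..T}"
  shows "\<bar>Iproc tau mu N c s t\<bar> \<le> (T - tau) / 2 * (B * (B + B^2)) * (2 * h + 1) / real N"
proof -
  have "0 \<le> h" using close[of 0] t tau by auto
  moreover have "0 \<le> B" using mu B by (meson exp_ge_zero mult_nonneg_nonneg order.trans)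
  ultimately have b0: "0 \<le> B * (B + B^2) * (2 * h + 1) / real N" by simp
  have "\<bar>integral {tau..t} (\<lambda>u. Yproc tau mu N c s u * Dproc tau mu N c s u)\<bar>
      \<le> B * (B + B^2) * (2 * h + 1) / real N * (t - tau)"
    using t b0 Yproc_Dproc_bound[OF tau mu N B h close] by (intro abs_integral_le) auto
  also have "\<dots> \<le> B * (B + B^2) * (2 * h + 1) / real N * (T - tau)"
    using t b0 by (intro mult_left_mono) auto
  finally show ?thesis by (simp add: Iproc_def mult_ac)
qed

lemma Iproc_bound_on_grid:
  fixes m R :: nat
  assumes tau: "0 < tau" and mu: "0 \<le> mu" and B: "mu * exp (T + 1) \<le> B"
    and s: "\<And>i. 0 \<le> s i" and m: "0 < m" "2 * m \<le> N"
    and cover: "real N * T + 2 * real m \<le> real (R * m)"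
    and grid: "\<And>j. j \<in> {1..R} \<Longrightarrow> \<bar>jump_time s (j * m) - real (j * m)\<bar> \<le> real m"
    and t: "t \<in> {tau..T}"
  shows "\<bar>Iproc tau mu N c s t\<bar> \<le> (T - tau) / 2 * (B * (B + B^2)) * (4 * real m + 1) / real N"
proof -
  have "\<bar>real (jump_count s v) - v\<bar> \<le> 2 * real m" if "0 \<le> v" "v \<le> real N * T" for v
  proof -
    have "v + real m + real m \<le> real (R * m)" using cover that by linarith
    from jump_count_close_to_time[OF s m(1) _ that(1) this grid] show ?thesis by simp
  qed
  then show ?thesis
    using Iproc_bound[OF tau mu _ B, where h = "2 * real m"] m t by simp
qed

lemma eventually_const_div_real_less: "0 < d \<Longrightarrow> \<forall>\<^sub>F N in sequentially. a / real N < d"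
  using tendsto_divide_0[OF tendsto_const filterlim_at_top_imp_at_infinity[OF filterlim_real_sequentially]]
  by (rule order_tendstoD(2))

lemma grid_covers_horizon:
  fixes m :: nat
  assumes "0 < eta" and "0 \<le> T" and "eta * real N \<le> real m"
  shows "real N * T + 2 * real m \<le> real ((nat \<lceil>T / eta\<rceil> + 2) * m)"
proof -
  have "real N * T = T / eta * (eta * real N)" using assms(1) by simp
  also have "\<dots> \<le> real (nat \<lceil>T / eta\<rceil>) * real m"
    using assms by (intro mult_mono[OF real_nat_ceiling_ge] of_nat_0_le_iff) auto
  finally show ?thesis by (simp add: algebra_simps)
qed

context prob_space
begin

lemma jump_time_erlang:
  fixes X :: "'i \<Rightarrow> 'a \<Rightarrow> real" and g :: "nat \<Rightarrow> 'i"
  assumes "inj g" and indep: "indep_vars (\<lambda>_. borel) X (range g)"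
    and "\<And>n. distributed M lborel (X (g n)) (exponential_density 1)" and "1 \<le> k"
  shows "distributed M lborel (\<lambda>\<omega>. jump_time (\<lambda>n. X (g n) \<omega>) k) (erlang_density (k - 1) 1)"
proof -
  have "distributed M lborel (\<lambda>\<omega>. \<Sum>i\<in>g ` {..<k}. X i \<omega>) (erlang_density (card (g ` {..<k}) - 1) 1)"
    using assms by (intro exponential_distributed_sum indep_vars_subset[OF indep]) (auto simp: lessThan_empty_iff)
  moreover have "card (g ` {..<k}) = k" using \<open>inj g\<close> by (simp add: card_image inj_on_subset)
  moreover have "(\<Sum>i\<in>g ` {..<k}. X i \<omega>) = jump_time (\<lambda>n. X (g n) \<omega>) k" for \<omega>
    using \<open>inj g\<close> by (simp add: jump_time_def sum.reindex inj_on_subset)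
  ultimately show ?thesis by simp
qed

lemma prob_jump_time_deviation:
  fixes X :: "'i \<Rightarrow> 'a \<Rightarrow> real" and g :: "nat \<Rightarrow> 'i"
  assumes "inj g" and "indep_vars (\<lambda>_. borel) X (range g)"
    and "\<And>n. distributed M lborel (X (g n)) (exponential_density 1)" and "1 \<le> k" and "0 < a"
  shows "{\<omega>\<in>space M. a \<le> \<bar>jump_time (\<lambda>n. X (g n) \<omega>) k - real k\<bar>} \<in> events"
    and "prob {\<omega>\<in>space M. a \<le> \<bar>jump_time (\<lambda>n. X (g n) \<omega>) k - real k\<bar>} \<le> real k / a^2"
proof -
  define J where "J \<omega> = jump_time (\<lambda>n. X (g n) \<omega>) k" for \<omega>
  have erlang: "distributed M lborel J (erlang_density (k - 1) 1)"
    unfolding J_def using jump_time_erlang assms by blast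
  then have [measurable]: "J \<in> borel_measurable M" using distributed_measurable[OF erlang] by simp
  show "{\<omega>\<in>space M. a \<le> \<bar>J \<omega> - real k\<bar>} \<in> events" by measurable
  have "expectation J = real k"
    using erlang_ith_moment[OF _ erlang, of 1] \<open>1 \<le> k\<close> by (simp add: fact_reduce)
  moreover have "variance J = real k"
    using erlang_distributed_variance[OF _ erlang] \<open>1 \<le> k\<close> by simp
  moreover have "integrable M (\<lambda>\<omega>. J \<omega> ^ 2)"
    using erlang_ith_moment_integrable[OF _ erlang] by simp
  ultimately show "prob {\<omega>\<in>space M. a \<le> \<bar>J \<omega> - real k\<bar>} \<le> real k / a^2"
    using Chebyshev_inequality[of J a] \<open>0 < a\<close> by simp
qed

lemma AE_exponential_pos:
  assumes "distributed M lborel Y (exponential_density l)" and "0 < l"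
  shows "AE \<omega> in M. 0 < Y \<omega>"
proof -
  have "prob {\<omega>\<in>space M. 0 < Y \<omega>} = 1"
    using exponential_distributedD_gt[OF assms(1) order.refl assms(2)] by simp
  then show ?thesis by (auto dest: AE_prob_1)
qed

lemma prob_grid_deviation:
  fixes X :: "'i \<Rightarrow> 'a \<Rightarrow> real" and g :: "nat \<Rightarrow> 'i" and m R :: nat
  assumes "inj g" and "indep_vars (\<lambda>_. borel) X (range g)"
    and "\<And>n. distributed M lborel (X (g n)) (exponential_density 1)" and m: "0 < m"
  defines "G \<equiv> \<Union>j\<in>{1..R}. {\<omega>\<in>space M. real m \<le> \<bar>jump_time (\<lambda>n. X (g n) \<omega>) (j * m) - real (j * m)\<bar>}"
  shows "G \<in> events" and "prob G \<le> real R ^ 2 / real m"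
proof -
  define F where "F j = {\<omega>\<in>space M. real m \<le> \<bar>jump_time (\<lambda>n. X (g n) \<omega>) (j * m) - real (j * m)\<bar>}" for j
  have F: "F j \<in> events" "prob (F j) \<le> real R / real m" if "j \<in> {1..R}" for j
  proof -
    have "1 \<le> j * m" using that m by simp
    note deviation = prob_jump_time_deviation[OF assms(1-3) this, of "real m"]
    show "F j \<in> events" using deviation(1) m unfolding F_def by simp
    have "real (j * m) / (real m)^2 = real j / real m" using m by (simp add: power2_eq_square)
    also have "\<dots> \<le> real R / real m" using that by (simp add: divide_right_mono)
    finally show "prob (F j) \<le> real R / real m" using deviation(2) m unfolding F_def by simp
  qed
  have G_eq: "G = (\<Union>j\<in>{1..R}. F j)" by (simp add: G_def F_def)
  show "G \<in> events" using F(1) by (auto simp: G_eq)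
  have "prob G \<le> (\<Sum>j\<in>{1..R}. prob (F j))"
    unfolding G_eq using F(1) by (intro finite_measure_subadditive_finite) auto
  also have "\<dots> \<le> (\<Sum>j\<in>{1..R}. real R / real m)" using F(2) by (rule sum_mono)
  finally show "prob G \<le> real R ^ 2 / real m" by (simp add: power2_eq_square)
qed

lemma grid_deviation_event:
  fixes X :: "'i \<Rightarrow> 'a \<Rightarrow> real" and g :: "nat \<Rightarrow> 'i" and m R :: nat
  assumes "inj g" and "indep_vars (\<lambda>_. borel) X (range g)"
    and expo: "\<And>n. distributed M lborel (X (g n)) (exponential_density 1)" and "0 < m"
  obtains A where "A \<in> events" and "prob A \<le> real R ^ 2 / real m"
    and "\<And>\<omega>. \<omega> \<in> space M - A \<Longrightarrow> (\<forall>n. 0 \<le> X (g n) \<omega>)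
      \<and> (\<forall>j\<in>{1..R}. \<bar>jump_time (\<lambda>n. X (g n) \<omega>) (j * m) - real (j * m)\<bar> \<le> real m)"
proof -
  have "AE \<omega> in M. \<forall>n. 0 < X (g n) \<omega>"
    using AE_exponential_pos[OF expo] by (simp add: AE_all_countable)
  then obtain A0 where A0: "{\<omega>\<in>space M. \<not> (\<forall>n. 0 < X (g n) \<omega>)} \<subseteq> A0" "A0 \<in> events" "prob A0 = 0"
    by (auto elim!: AE_E simp: emeasure_eq_measure)
  define G where "G = (\<Union>j\<in>{1..R}.
    {\<omega>\<in>space M. real m \<le> \<bar>jump_time (\<lambda>n. X (g n) \<omega>) (j * m) - real (j * m)\<bar>})"
  note G = prob_grid_deviation[OF assms, of R, folded G_def]
  have "prob (A0 \<union> G) \<le> real R ^ 2 / real m"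
    using measure_Un_le[OF A0(2) G(1)] A0(3) G(2) by linarith
  moreover have "A0 \<union> G \<in> events" using A0(2) G(1) by blast
  moreover have "(\<forall>n. 0 \<le> X (g n) \<omega>)
      \<and> (\<forall>j\<in>{1..R}. \<bar>jump_time (\<lambda>n. X (g n) \<omega>) (j * m) - real (j * m)\<bar> \<le> real m)"
    if "\<omega> \<in> space M - (A0 \<union> G)" for \<omega>
    using that A0(1) by (auto simp: G_def not_le intro: less_imp_le)
  ultimately show ?thesis using that by blast
qed

lemma Iproc_bound_outside_small_event:
  fixes X :: "'i \<Rightarrow> 'a \<Rightarrow> real" and g :: "nat \<Rightarrow> 'i"
  assumes "inj g" and "indep_vars (\<lambda>_. borel) X (range g)"
    and "\<And>n. distributed M lborel (X (g n)) (exponential_density 1)"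
    and tau: "0 < tau" and mu: "0 \<le> mu" and T: "tau \<le> T" and B: "mu * exp (T + 1) \<le> B"
    and eta: "0 < eta" "eta \<le> 1/4" and N: "4 \<le> N"
  obtains A where "A \<in> events" and "prob A \<le> real (nat \<lceil>T / eta\<rceil> + 2) ^ 2 / (eta * real N)"
    and "\<And>\<omega> c t. \<omega> \<in> space M - A \<Longrightarrow> t \<in> {tau..T} \<Longrightarrow>
      \<bar>Iproc tau mu N c (\<lambda>n. X (g n) \<omega>) t\<bar> \<le> (T - tau) / 2 * (B * (B + B^2)) * (4 * eta + 5 / real N)"
proof -
  define R where "R = nat \<lceil>T / eta\<rceil> + 2"
  define m where "m = nat \<lceil>eta * real N\<rceil>"
  have m: "eta * real N \<le> real m" "real m \<le> eta * real N + 1" "0 < m"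
    using eta N by (auto simp: m_def)
  have "eta * real N \<le> 1/4 * real N" "4 \<le> real N" using mult_right_mono[OF eta(2)] N by auto
  then have "2 * m \<le> N" using m by linarith
  obtain A where A: "A \<in> events" "prob A \<le> real R ^ 2 / real m"
    and good: "\<And>\<omega>. \<omega> \<in> space M - A \<Longrightarrow> (\<forall>n. 0 \<le> X (g n) \<omega>)
      \<and> (\<forall>j\<in>{1..R}. \<bar>jump_time (\<lambda>n. X (g n) \<omega>) (j * m) - real (j * m)\<bar> \<le> real m)"
    using grid_deviation_event[OF assms(1-3) m(3)] by metis
  have "real R ^ 2 / real m \<le> real R ^ 2 / (eta * real N)"
    using m eta N by (intro divide_left_mono) auto
  moreover have "\<bar>Iproc tau mu N c (\<lambda>n. X (g n) \<omega>) t\<bar> \<le> (T - tau) / 2 * (B * (B + B^2)) * (4 * eta + 5 / real N)"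
    if "\<omega> \<in> space M - A" "t \<in> {tau..T}" for \<omega> c t
  proof -
    define C where "C = (T - tau) / 2 * (B * (B + B^2))"
    have "0 \<le> B" using mu B by (meson exp_ge_zero mult_nonneg_nonneg order.trans)
    then have "0 \<le> C" using T by (simp add: C_def)
    have "\<bar>Iproc tau mu N c (\<lambda>n. X (g n) \<omega>) t\<bar> \<le> C * (4 * real m + 1) / real N"
      using Iproc_bound_on_grid[OF tau mu B _ m(3) \<open>2 * m \<le> N\<close> _ _ that(2), where R = R]
        good[OF that(1)] grid_covers_horizon[OF eta(1) _ m(1)] tau T
      by (simp add: C_def R_def)
    also have "\<dots> \<le> C * (4 * eta * real N + 5) / real N"
      using m \<open>0 \<le> C\<close> by (intro divide_right_mono mult_left_mono) auto
    also have "\<dots> = C * (4 * eta + 5 / real N)" using N by (simp add: field_simps)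
    finally show ?thesis by (simp add: C_def)
  qed
  ultimately show ?thesis using that A by (simp add: R_def)
qed

lemma Iproc_small_in_probability:
  fixes X :: "nat \<Rightarrow> 'i \<Rightarrow> 'a \<Rightarrow> real" and g :: "nat \<Rightarrow> 'i"
  assumes "inj g" and "\<And>N. indep_vars (\<lambda>_. borel) (X N) (range g)"
    and "\<And>N n. distributed M lborel (X N (g n)) (exponential_density 1)"
    and "0 < tau" and mu: "0 \<le> mu" and T: "tau < T" and \<epsilon>: "0 < \<epsilon>" and \<delta>: "0 < \<delta>"
  shows "\<forall>\<^sub>F N in sequentially. \<exists>A\<in>events. prob A < \<delta> \<and>
    (\<forall>\<omega>\<in>space M - A. \<forall>c. \<forall>t\<in>{tau..T}. \<bar>Iproc tau mu N c (\<lambda>n. X N (g n) \<omega>) t\<bar> \<le> \<epsilon>)"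
proof -
  define B where "B = mu * exp (T + 1)"
  define C where "C = (T - tau) / 2 * (B * (B + B^2))"
  have "0 \<le> C" using mu T by (simp add: C_def B_def)
  obtain eta where eta: "0 < eta" "eta < 1/4" "eta < \<epsilon> / (8 * (C + 1))"
    using field_lbound_gt_zero[of "1/4" "\<epsilon> / (8 * (C + 1))"] \<epsilon> \<open>0 \<le> C\<close> by auto
  then have "4 * C * eta \<le> \<epsilon> / 2"
    using \<open>0 \<le> C\<close> by (simp add: field_simps)
  define R where "R = nat \<lceil>T / eta\<rceil> + 2"
  have "\<forall>\<^sub>F N in sequentially. 4 \<le> N \<and> real R ^ 2 / eta / real N < \<delta> \<and> 5 * C / real N < \<epsilon> / 2"
    using \<delta> \<epsilon> by (intro eventually_conj eventually_ge_at_top eventually_const_div_real_less) auto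
  then show ?thesis
  proof (rule eventually_mono, elim conjE)
    fix N assume "4 \<le> N" and "real R ^ 2 / eta / real N < \<delta>" and "5 * C / real N < \<epsilon> / 2"
    obtain A where A: "A \<in> events" "prob A \<le> real R ^ 2 / (eta * real N)"
      and bound: "\<And>\<omega> c t. \<omega> \<in> space M - A \<Longrightarrow> t \<in> {tau..T} \<Longrightarrow>
        \<bar>Iproc tau mu N c (\<lambda>n. X N (g n) \<omega>) t\<bar> \<le> C * (4 * eta + 5 / real N)"
      by (rule Iproc_bound_outside_small_event[of g "X N" tau mu T B eta N, folded R_def C_def])
        (use assms eta \<open>4 \<le> N\<close> in \<open>auto simp: B_def\<close>)
    have "C * (4 * eta + 5 / real N) = 4 * C * eta + 5 * C / real N" by (simp add: algebra_simps)
    then have "\<bar>Iproc tau mu N c (\<lambda>n. X N (g n) \<omega>) t\<bar> \<le> \<epsilon>"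
      if "\<omega> \<in> space M - A" "t \<in> {tau..T}" for \<omega> c t
      using bound[OF that, of c] \<open>4 * C * eta \<le> \<epsilon> / 2\<close> \<open>5 * C / real N < \<epsilon> / 2\<close> by linarith
    moreover have "prob A < \<delta>" using A(2) \<open>real R ^ 2 / eta / real N < \<delta>\<close> by simp
    ultimately show "\<exists>A\<in>events. prob A < \<delta> \<and>
      (\<forall>\<omega>\<in>space M - A. \<forall>c. \<forall>t\<in>{tau..T}. \<bar>Iproc tau mu N c (\<lambda>n. X N (g n) \<omega>) t\<bar> \<le> \<epsilon>)"
      using A(1) by blast
  qed
qed

end

theorem proposition3p6:
  fixes M :: "'a measure" and tau mu T :: real
    and V :: "nat \<Rightarrow> nat + nat \<Rightarrow> 'a \<Rightarrow> real"
  assumes "prob_space M"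
    and "tau > 0" and "mu \<ge> 0" and "T > tau"
    and indep: "\<And>N. prob_space.indep_vars M (\<lambda>_. borel) (V N) UNIV"
    and coin1: "\<And>N n. measure M {\<omega> \<in> space M. V N (Inl n) \<omega> = 1} = 1/2"
    and coin0: "\<And>N n. measure M {\<omega> \<in> space M. V N (Inl n) \<omega> = 0} = 1/2"
    and expo: "\<And>N n. distributed M lborel (V N (Inr n)) (exponential_density 1)"
  shows "\<forall>\<epsilon>>0. \<forall>\<delta>>0. \<forall>\<^sub>F N in sequentially.
           \<exists>A \<in> sets M. measure M A < \<delta> \<and>
             {\<omega> \<in> space M. \<exists>t\<in>{tau..T}.
                \<bar>Iproc tau mu N (\<lambda>n. V N (Inl n) \<omega> = 1) (\<lambda>n. V N (Inr n) \<omega>) t\<bar> > \<epsilon>} \<subseteq> A"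
proof (intro allI impI, goal_cases)
  case (1 \<epsilon> \<delta>)
  interpret prob_space M by fact
  have "\<forall>\<^sub>F N in sequentially. \<exists>A\<in>events. prob A < \<delta> \<and>
    (\<forall>\<omega>\<in>space M - A. \<forall>c. \<forall>t\<in>{tau..T}. \<bar>Iproc tau mu N c (\<lambda>n. V N (Inr n) \<omega>) t\<bar> \<le> \<epsilon>)"
    using Iproc_small_in_probability[of Inr V] indep_vars_subset[OF indep] expo assms(2-4) 1 by simp
  then show ?case
    by (rule eventually_mono) (fastforce simp: not_le[symmetric])
qed

end
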